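(* In the setting and notation described in the context (GKSM iteration), assume $K<+\infty$ and $0<\alpha_{\min}\le\alpha_k\le\alpha_{\max}<\frac{2\underline{\eta}}{\underline{\eta}+L}$ for all $k$; put $\upsilon:=\frac{\underline{\eta}}{\alpha_{\max}}-\frac{\underline{\eta}+L}{2}>0$. Then: (i) $\|\mathbf x_{k+1}-\mathbf x_k\|\to0$, and every cluster point $\hat{\mathbf x}$ of $\{\mathbf x_k\}$ is a critical point of $\min_{\mathbf x\in\mathcal C}F(\mathbf x)$, i.e. $\mathbf 0\in\nabla F(\hat{\mathbf x})+\partial\iota_{\mathcal C}(\hat{\mathbf x})$. (ii) Suppose moreover that $\mathbf x_k\to\mathbf x^*$ and that $F_{\mathcal C}$ satisfies the KL inequality at $\bar{\mathbf x}=\mathbf x^*$ with desingularizing function $\varphi(s)=c\,s^{1-t}$ ($c>0$, $t\in[0,1)$), constant $\eta>0$ and a neighborhood $\mathcal U$ of $\mathbf x^*$ containing a closed ball $\mathcal B(\mathbf x^*,\Lambda)$, $\Lambda>0$. Set $F^*:=F(\mathbf x^* )$. Then there exists $K'>K+1$ such that $\mathbf x_k\in\mathcal B(\mathbf x^*,\Lambda)$ and $|F_{\mathcal C}(\mathbf x_k)-F^*|<\eta$ for all $k\ge K'$, and, with $F_{K'}:=F(\mathbf x_{K'})-F^*$ and $\gamma:=\sup_k\frac{[c(L\alpha_k+\overline{\eta})]^2}{\upsilon(1-t)^2\alpha_k^2}$, the following hold for $k\ge K'$: 1. if $t=0$: $F(\mathbf x_{k+1})-F^*\le\big(F_{K'}-\tfrac{1}{\gamma}(k-K'+1)\big)_+$,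 where $(a)_+=\max(a,0)$; 2. if $t\in(0,\tfrac12]$: $F(\mathbf x_{k+1})-F^*\le\Big(1-\frac{F_{K'}^{2t-1}}{F_{K'}^{2t-1}+\gamma}\Big)^{k-K'+1}F_{K'}$; 3. if $t\in(\tfrac12,1)$: for every $\sigma\in(0,1)$ and all sufficiently large $k$, $F(\mathbf x_{k+1})-F^*\le\big(F_{K'}^{1-2t}+q\,(k-K'+1)\big)^{\frac{1}{1-2t}}$ with $q=(t-\tfrac12)(1-\sigma)^{2t}/\gamma$.
   Context: Setting. Identify $\mathbb C^N$ with $\mathbb R^{2N}$ equipped with the real inner product $\mathrm{Re}\langle\mathbf u,\mathbf v\rangle$, where $\langle\mathbf u,\mathbf v\rangle=\mathbf u^{H}\mathbf v$ ($^H$ = conjugate transpose); all gradients are taken with respect to this inner product. Let $\mathbf A\in\mathbb C^{m\times N}$, $\mathbf y\in\mathbb C^m$ with $\mathbf A^H\mathbf y\neq\mathbf 0$, and $h(\mathbf x)=\frac12\|\mathbf A\mathbf x-\mathbf y\|_2^2$ (so $\nabla h(\mathbf x)=\mathbf A^H(\mathbf A\mathbf x-\mathbf y)$). Let $f:\mathbb C^N\to\mathbb R$ be differentiable and bounded below, with $\nabla f$ $L$-Lipschitz ($L>0$): $\|\nabla f(\mathbf x_1)-\nabla f(\mathbf x_2)\|\le L\|\mathbf x_1-\mathbf x_2\|$. Let $\mathcal C\subseteq\mathbb C^N$ be nonempty, closed and convex, $\iota_{\mathcal C}$ its indicator function ($0$ on $\mathcal C$, $+\infty$ outside), $F=h+f$,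 $F_{\mathcal C}=F+\iota_{\mathcal C}$, and $\|\mathbf x\|_{\mathbf M}^2=\mathbf x^H\mathbf M\mathbf x$. GKSM iteration. Fix $K\in\{1,2,\dots\}\cup\{+\infty\}$, stepsizes $\alpha_k>0$, and Hermitian matrices $\mathbf B_k\in\mathbb C^{N\times N}$ with $\underline{\eta}\,\mathbf I\preceq\mathbf B_k\preceq\overline{\eta}\,\mathbf I$ for all $k$, where $0<\underline{\eta}\le\overline{\eta}<\infty$ (in the paper $\mathbf B_k$ is produced by a modified self-scaling Hermitian rank-one quasi-Newton rule whose output satisfies these bounds). Let $\mathbf V_1=\mathbf A^H\mathbf y/\|\mathbf A^H\mathbf y\|$ and choose $\mathbf x_1\in\mathcal C\cap\operatorname{range}(\mathbf V_1)$. For $k=1,2,\dots$: define $\bar F_k(\mathbf x)=h(\mathbf x)+\mathrm{Re}\langle\nabla f(\mathbf x_k),\mathbf x\rangle+\frac{1}{2\alpha_k}\|\mathbf x-\mathbf x_k\|_{\mathbf B_k}^2$; let $\boldsymbol\beta_k$ be the (unique) minimizer of $\boldsymbol\beta\mapsto\bar F_k(\mathbf V_k\boldsymbol\beta)$ over $\{\boldsymbol\beta:\mathbf V_k\boldsymbol\beta\in\mathcal C\}$, and set $\mathbf x_{k+1}=\mathbf V_k\boldsymbol\beta_k$. Then, if $k\le K$: compute $\mathbf r_k=\nabla\bar F_k(\mathbf x_{k+1})=\mathbf A^H(\mathbf A\mathbf x_{k+1}-\mathbf y)+\nabla f(\mathbf x_k)+\alpha_k^{-1}\mathbf B_k(\mathbf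 x_{k+1}-\mathbf x_k)$ and $\tilde{\mathbf r}_k=(\mathbf I-\mathbf V_k\mathbf V_k^H)\mathbf r_k$; if $\tilde{\mathbf r}_k\ne\mathbf 0$ set $\mathbf V_{k+1}=[\mathbf V_k,\ \tilde{\mathbf r}_k/\|\tilde{\mathbf r}_k\|]$, otherwise $\mathbf V_{k+1}=\mathbf V_k$. If $k>K$: set $\mathbf V_{k+1}=\mathbf I_N$. (Thus every $\mathbf V_k$ has orthonormal columns, $\mathbf V_k^H\mathbf V_k=\mathbf I$.) KL inequality. A proper lower semicontinuous $\chi:\mathbb C^N\to(-\infty,+\infty]$ satisfies the Kurdyka–Łojasiewicz inequality at $\bar{\mathbf x}\in\operatorname{dom}\partial\chi$ if there exist $\eta>0$, a neighborhood $\mathcal U$ of $\bar{\mathbf x}$ and a continuous concave $\varphi:[0,\eta)\to\mathbb R_+$, continuously differentiable on $(0,\eta)$, with $\varphi(0)=0$ and $\varphi'>0$ on $(0,\eta)$, such that $\varphi'(|\chi(\mathbf x)-\chi(\bar{\mathbf x})|)\cdot\operatorname{dist}(\mathbf 0,\partial\chi(\mathbf x))\ge1$ for all $\mathbf x\in\mathcal U$ with $|\chi(\mathbf x)-\chi(\bar{\mathbf x})|<\eta$. Here $\partial$ denotes the (limiting) subdifferential and $\operatorname{dist}$ the Euclidean distance. *)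

theory Defs
  imports "HOL-Analysis.Analysis"
begin

text \<open>The real inner product
  (x \<bullet> y) on complex ^ 'n coincides with Re of the Hermitian product, and norm is the
  Euclidean norm; gradients are taken w.r.t. this real inner product.\<close>

definition cinner :: "complex ^ 'n \<Rightarrow> complex ^ 'n \<Rightarrow> complex" where
  "cinner u v = (\<Sum>i\<in>UNIV. cnj (u $ i) * v $ i)"

definition cadj :: "complex ^ 'n ^ 'm \<Rightarrow> complex ^ 'm ^ 'n" where
  "cadj M = (\<chi> i j. cnj (M $ j $ i))"

definition hermitian :: "complex ^ 'n ^ 'n \<Rightarrow> bool" where
  "hermitian M \<longleftrightarrow> cadj M = M"

definition mnorm2 :: "complex ^ 'n ^ 'n \<Rightarrow> complex ^ 'n \<Rightarrow> real" where
  "mnorm2 M x = Re (cinner x (M *v x))"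

text \<open>A matrix with columns vs (a list of column vectors) applied to beta.\<close>
definition colmult :: "(complex ^ 'n) list \<Rightarrow> (nat \<Rightarrow> complex) \<Rightarrow> complex ^ 'n" where
  "colmult vs b = (\<Sum>j<length vs. b j *s (vs ! j))"

definition colspace :: "(complex ^ 'n) list \<Rightarrow> (complex ^ 'n) set" where
  "colspace vs = range (colmult vs)"

text \<open>(I - V V^H) r for V with columns vs.\<close>
definition projperp :: "(complex ^ 'n) list \<Rightarrow> complex ^ 'n \<Rightarrow> complex ^ 'n" where
  "projperp vs r = r - (\<Sum>j<length vs. cinner (vs ! j) r *s (vs ! j))"

definition ind :: "'a set \<Rightarrow> 'a \<Rightarrow> ereal" where
  "ind C x = (if x \<in> C then 0 else \<infinity>)"

definition frechet_subdiff :: "('a::real_inner \<Rightarrow> ereal) \<Rightarrow> 'a \<Rightarrow> 'a set" where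
  "frechet_subdiff g x = {v. \<bar>g x\<bar> \<noteq> \<infinity> \<and>
     (\<forall>\<epsilon>>0. \<exists>\<delta>>0. \<forall>z. 0 < norm (z - x) \<and> norm (z - x) < \<delta> \<longrightarrow>
        g z \<ge> g x + ereal (v \<bullet> (z - x) - \<epsilon> * norm (z - x)))}"

definition lsubdiff :: "('a::real_inner \<Rightarrow> ereal) \<Rightarrow> 'a \<Rightarrow> 'a set" where
  "lsubdiff g x = {v. \<bar>g x\<bar> \<noteq> \<infinity> \<and>
     (\<exists>xs vs. xs \<longlonglongrightarrow> x \<and> (\<lambda>j. g (xs j)) \<longlonglongrightarrow> g x \<and>
        (\<forall>j. vs j \<in> frechet_subdiff g (xs j)) \<and> vs \<longlonglongrightarrow> v)}"

text \<open>KL inequality at xbar with desingularizing function phi(s) = c s^(1-t),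
  constant eta and neighbourhood U (phi'(s) = c (1-t) s^(-t), s in (0,eta)).\<close>
definition KL_power_at ::
  "('a::real_inner \<Rightarrow> ereal) \<Rightarrow> 'a \<Rightarrow> real \<Rightarrow> real \<Rightarrow> real \<Rightarrow> 'a set \<Rightarrow> bool" where
  "KL_power_at g xbar c t \<eta> U \<longleftrightarrow>
     lsubdiff g xbar \<noteq> {} \<and> \<eta> > 0 \<and> open U \<and> xbar \<in> U \<and>
     (\<forall>z\<in>U. 0 < \<bar>g z - g xbar\<bar> \<and> \<bar>g z - g xbar\<bar> < ereal \<eta> \<longrightarrow>
        (\<forall>v\<in>lsubdiff g z.
           c * (1 - t) * (real_of_ereal \<bar>g z - g xbar\<bar>) powr (- t) * norm v \<ge> 1))"

end

theory Submission
  imports Defs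
begin

text \<open>Each iterate minimises the strongly convex model \<open>Fbar k\<close> over \<open>C \<inter> S k\<close>, so the
  residual \<open>r k\<close> satisfies the variational inequality \<open>r k \<bullet> (w - x (k+1)) \<ge> 0\<close> on \<open>C \<inter> S k\<close>.
  Comparing \<open>Fbar k\<close> at \<open>x k\<close> and \<open>x (k+1)\<close> and using the descent lemma for \<open>f\<close> gives
  \<open>F (x (k+1)) + \<upsilon> \<parallel>x (k+1) - x k\<parallel>\<^sup>2 \<le> F (x k)\<close>; as \<open>F\<close> is bounded below, the steps tend to \<open>0\<close>.
  Once \<open>k > K + 1\<close> the subspace is the whole space, so \<open>- r k\<close> is normal to \<open>C\<close> at \<open>x (k+1)\<close> and
  \<open>\<nabla>F (x (k+1)) - r k\<close> is a subgradient of \<open>F\<^sub>C\<close> of norm \<open>O(\<parallel>x (k+1) - x k\<parallel>)\<close>. Along a convergent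
  subsequence this subgradient tends to \<open>0\<close>, which makes cluster points critical; near \<open>x\<^sup>*\<close> the KL
  inequality turns it, together with the sufficient decrease, into the recursion
  \<open>e (k+1) powr (2 t) \<le> \<gamma> (e k - e (k+1))\<close> for \<open>e k = F (x k) - F\<^sup>*\<close>, from which the three rates
  follow by elementary estimates on real sequences.\<close>

section \<open>Linear algebra on \<open>complex ^ 'n\<close>\<close>

lemma inner_eq_Re_cinner: "u \<bullet> v = Re (cinner u v)"
proof -
  have "Re (cinner u v) = (\<Sum>i\<in>UNIV. Re (cnj (u$i) * v$i))"
    unfolding cinner_def by (rule Re_sum)
  also have "\<dots> = u \<bullet> v" by (simp add: inner_complex_def inner_vec_def)
  finally show ?thesis ..
qed

lemma cinner_matrix_vector_mult_left: "cinner (M *v u) w = cinner u (cadj M *v w)"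
proof -
  have "cinner (M *v u) w = (\<Sum>i\<in>UNIV. \<Sum>j\<in>UNIV. cnj (M$i$j) * cnj (u$j) * w$i)"
    unfolding cinner_def matrix_vector_mult_def by (simp add: sum_distrib_right)
  also have "\<dots> = (\<Sum>j\<in>UNIV. \<Sum>i\<in>UNIV. cnj (M$i$j) * cnj (u$j) * w$i)"
    by (rule sum.swap)
  also have "\<dots> = cinner u (cadj M *v w)"
    unfolding cinner_def matrix_vector_mult_def cadj_def by (simp add: sum_distrib_left mult_ac)
  finally show ?thesis .
qed

lemma inner_matrix_vector_mult_left: "(M *v u) \<bullet> w = u \<bullet> (cadj M *v w)"
  by (simp add: inner_eq_Re_cinner cinner_matrix_vector_mult_left)

lemma hermitian_inner_commute: "hermitian B \<Longrightarrow> (B *v u) \<bullet> w = u \<bullet> (B *v w)"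
  unfolding hermitian_def by (metis inner_matrix_vector_mult_left)

lemma mnorm2_eq_inner: "mnorm2 B v = v \<bullet> (B *v v)"
  by (simp add: mnorm2_def inner_eq_Re_cinner)

lemma complex_matrix_vector_mult_scaleR: "(M::complex^'n^'m) *v (s *\<^sub>R u) = s *\<^sub>R (M *v u)"
  by (rule linear_scale[OF matrix_vector_mul_linear])

lemma mnorm2_scaleR: "mnorm2 B (s *\<^sub>R v) = s\<^sup>2 * mnorm2 B v"
  by (simp add: mnorm2_eq_inner complex_matrix_vector_mult_scaleR power2_eq_square)

lemma mnorm2_add:
  assumes "hermitian B"
  shows "mnorm2 B (u + d) = mnorm2 B u + 2 * ((B *v u) \<bullet> d) + mnorm2 B d"
  using hermitian_inner_commute[OF assms, of d u]
  by (simp add: mnorm2_eq_inner matrix_vector_right_distrib inner_add_left inner_add_right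
      inner_commute)

text \<open>Expanding the positive form on \<open>\<parallel>w\<parallel> v - \<parallel>v\<parallel> w\<close> with \<open>w = B v\<close>, and using
  \<open>v \<bullet> B w = w \<bullet> B v = \<parallel>w\<parallel>\<^sup>2\<close>, gives \<open>2 \<parallel>w\<parallel>\<^sup>3 \<parallel>v\<parallel> \<le> 2 e \<parallel>w\<parallel>\<^sup>2 \<parallel>v\<parallel>\<^sup>2\<close>.\<close>
lemma norm_hermitian_mult_le:
  fixes B :: "complex^'n^'n"
  assumes herm: "hermitian B" and psd: "\<And>u. 0 \<le> mnorm2 B u"
    and upper: "\<And>u. mnorm2 B u \<le> e * (norm u)\<^sup>2"
  shows "norm (B *v v) \<le> e * norm v"
proof (cases "v = 0 \<or> B *v v = 0")
  case True
  moreover have "0 \<le> e * (norm v)\<^sup>2" using psd upper order_trans by blast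
  ultimately show ?thesis by (auto simp: zero_le_mult_iff)
next
  case False
  define w where "w = B *v v"
  have vw: "v \<bullet> (B *v w) = (norm w)\<^sup>2" "w \<bullet> (B *v v) = (norm w)\<^sup>2"
    using hermitian_inner_commute[OF herm, of v w]
    by (simp_all add: w_def power2_norm_eq_inner)
  have "0 \<le> mnorm2 B (norm w *\<^sub>R v - norm v *\<^sub>R w)" by (rule psd)
  also have "\<dots> = (norm w)\<^sup>2 * mnorm2 B v - 2 * norm v * norm w ^ 3 + (norm v)\<^sup>2 * mnorm2 B w"
    using vw by (simp add: mnorm2_eq_inner complex_matrix_vector_mult_scaleR
        power2_eq_square power3_eq_cube algebra_simps)
  also have "\<dots> \<le> (norm w)\<^sup>2 * (e * (norm v)\<^sup>2) - 2 * norm v * norm w ^ 3 + (norm v)\<^sup>2 * (e * (norm w)\<^sup>2)"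
    by (intro add_mono diff_mono mult_left_mono upper) simp_all
  finally have "norm v * (norm w)\<^sup>2 * norm w \<le> norm v * (norm w)\<^sup>2 * (e * norm v)"
    by (simp add: power2_eq_square power3_eq_cube algebra_simps)
  then show ?thesis
    using False by (simp add: w_def)
qed

lemma residual_norm_sq_add:
  fixes A :: "complex^'n^'m"
  shows "(norm (A *v (u + d) - y))\<^sup>2 = (norm (A *v u - y))\<^sup>2
     + 2 * ((cadj A *v (A *v u - y)) \<bullet> d) + (norm (A *v d))\<^sup>2"
proof -
  have "A *v (u + d) - y = (A *v u - y) + A *v d" by (simp add: matrix_vector_right_distrib)
  then have "(norm (A *v (u + d) - y))\<^sup>2
      = (norm (A *v u - y))\<^sup>2 + 2 * ((A *v u - y) \<bullet> (A *v d)) + (norm (A *v d))\<^sup>2"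
    by (simp only: power2_norm_eq_inner inner_add_left inner_add_right inner_commute)
  moreover have "(A *v u - y) \<bullet> (A *v d) = (cadj A *v (A *v u - y)) \<bullet> d"
    by (metis inner_matrix_vector_mult_left inner_commute)
  ultimately show ?thesis by simp
qed

lemma colmult_nth: "colmult vs b $ i = (\<Sum>j<length vs. b j * vs ! j $ i)"
  unfolding colmult_def by (simp add: sum_component)

lemma subspace_colspace: "subspace (colspace vs)"
  unfolding subspace_def colspace_def
proof (intro conjI ballI allI)
  have "colmult vs (\<lambda>_. 0) = 0" by (simp add: vec_eq_iff colmult_nth)
  then show "0 \<in> range (colmult vs)" by (metis rangeI)
next
  fix u w assume "u \<in> range (colmult vs)" "w \<in> range (colmult vs)"
  then obtain a b where "u = colmult vs a" "w = colmult vs b" by auto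
  then have "u + w = colmult vs (\<lambda>j. a j + b j)"
    by (simp add: vec_eq_iff colmult_nth sum.distrib distrib_right)
  then show "u + w \<in> range (colmult vs)" by simp
next
  fix c :: real and u assume "u \<in> range (colmult vs)"
  then obtain a where "u = colmult vs a" by auto
  then have "c *\<^sub>R u = colmult vs (\<lambda>j. of_real c * a j)"
    by (simp add: vec_eq_iff colmult_nth scaleR_sum_right) (simp add: scaleR_conv_of_real mult_ac)
  then show "c *\<^sub>R u \<in> range (colmult vs)" by simp
qed

lemma colspace_append_subset: "colspace vs \<subseteq> colspace (vs @ [v])"
proof
  fix u assume "u \<in> colspace vs"
  then obtain b where u: "u = colmult vs b" unfolding colspace_def by auto
  have "colmult (vs @ [v]) (b(length vs := 0)) = u"
    unfolding u vec_eq_iff colmult_nth by (simp add: nth_append)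
  then show "u \<in> colspace (vs @ [v])" unfolding colspace_def by (metis rangeI)
qed

section \<open>Smoothness, optimality and subgradients\<close>

lemma lipschitz_gradient_upper_bound:
  fixes f :: "'a::real_inner \<Rightarrow> real"
  assumes grad: "\<And>z. (f has_derivative (\<lambda>h. gf z \<bullet> h)) (at z)"
    and lip: "\<And>z1 z2. norm (gf z1 - gf z2) \<le> L * norm (z1 - z2)"
  shows "f (u + d) \<le> f u + gf u \<bullet> d + L / 2 * (norm d)\<^sup>2"
proof -
  define g where "g s = f u + s * (gf u \<bullet> d) + L / 2 * s\<^sup>2 * (norm d)\<^sup>2 - f (u + s *\<^sub>R d)" for s
  have path: "((\<lambda>s. f (u + s *\<^sub>R d)) has_real_derivative gf (u + s *\<^sub>R d) \<bullet> d) (at s)" for s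
  proof -
    have "((\<lambda>s. u + s *\<^sub>R d) has_derivative (\<lambda>h. h *\<^sub>R d)) (at s)"
      by (auto intro!: derivative_eq_intros)
    from has_derivative_compose[OF this grad] show ?thesis
      by (rule has_derivative_imp_has_field_derivative) (simp add: mult.commute)
  qed
  have "g 0 \<le> g 1"
  proof (rule deriv_nonneg_imp_mono
      [where g = g and g' = "\<lambda>s. gf u \<bullet> d + L * s * (norm d)\<^sup>2 - gf (u + s *\<^sub>R d) \<bullet> d"])
    fix s :: real assume "s \<in> {0..1}"
    then have s: "0 \<le> s" by simp
    show "(g has_real_derivative gf u \<bullet> d + L * s * (norm d)\<^sup>2 - gf (u + s *\<^sub>R d) \<bullet> d) (at s)"
      unfolding g_def by (auto intro!: derivative_eq_intros path simp: power2_eq_square)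
    have "(gf (u + s *\<^sub>R d) - gf u) \<bullet> d \<le> norm (gf (u + s *\<^sub>R d) - gf u) * norm d"
      by (rule norm_cauchy_schwarz)
    also have "\<dots> \<le> L * norm (s *\<^sub>R d) * norm d"
      using lip[of "u + s *\<^sub>R d" u] by (simp add: mult_right_mono)
    also have "\<dots> = L * s * (norm d)\<^sup>2" using s by (simp add: power2_eq_square)
    finally show "0 \<le> gf u \<bullet> d + L * s * (norm d)\<^sup>2 - gf (u + s *\<^sub>R d) \<bullet> d"
      by (simp add: inner_diff_left)
  qed simp
  then show ?thesis by (simp add: g_def)
qed

lemma lipschitz_gradient_lower_bound:
  fixes f :: "'a::real_inner \<Rightarrow> real"
  assumes grad: "\<And>z. (f has_derivative (\<lambda>h. gf z \<bullet> h)) (at z)"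
    and lip: "\<And>z1 z2. norm (gf z1 - gf z2) \<le> L * norm (z1 - z2)"
  shows "f u + gf u \<bullet> d - L / 2 * (norm d)\<^sup>2 \<le> f (u + d)"
proof -
  have "((\<lambda>z. - f z) has_derivative (\<lambda>h. - gf z \<bullet> h)) (at z)" for z
    using has_derivative_minus[OF grad] by simp
  moreover have "norm (- gf z1 - - gf z2) \<le> L * norm (z1 - z2)" for z1 z2
    using lip[of z1 z2] by (simp add: norm_minus_commute)
  ultimately have "- f (u + d) \<le> - f u + - gf u \<bullet> d + L / 2 * (norm d)\<^sup>2"
    by (rule lipschitz_gradient_upper_bound)
  then show ?thesis by simp
qed

lemma min_on_convex_imp_variational_ineq:
  fixes \<phi> :: "'a::real_inner \<Rightarrow> real"
  assumes D: "convex D" "u \<in> D" "w \<in> D" and min: "\<And>z. z \<in> D \<Longrightarrow> \<phi> u \<le> \<phi> z"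
    and quad: "\<And>s. \<phi> (u + s *\<^sub>R (w - u)) = \<phi> u + s * (g \<bullet> (w - u)) + s\<^sup>2 * Q"
  shows "0 \<le> g \<bullet> (w - u)"
proof (rule ccontr)
  define a where "a = g \<bullet> (w - u)"
  assume "\<not> 0 \<le> g \<bullet> (w - u)"
  then have a: "a < 0" by (simp add: a_def)
  have on_segment: "\<phi> u \<le> \<phi> u + s * a + s\<^sup>2 * Q" if "0 \<le> s" "s \<le> 1" for s
  proof -
    have "(1 - s) *\<^sub>R u + s *\<^sub>R w \<in> D" using convexD[OF D] that by simp
    moreover have "(1 - s) *\<^sub>R u + s *\<^sub>R w = u + s *\<^sub>R (w - u)" by (simp add: algebra_simps)
    ultimately show ?thesis using min quad a_def by metis
  qed
  from on_segment[of 1] a have Q: "0 < Q" by simp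
  define s where "s = - a / (2 * Q)"
  have "0 < s" "s \<le> 1"
    using on_segment[of 1] a Q by (auto simp: s_def field_simps)
  moreover have "s * a + s\<^sup>2 * Q = s * a / 2"
    using Q by (simp add: s_def power2_eq_square field_simps)
  moreover have "s * a < 0" using \<open>0 < s\<close> a by (rule mult_pos_neg)
  ultimately show False
    using on_segment[of s] by linarith
qed

lemma frechet_subdiff_imp_lsubdiff: "v \<in> frechet_subdiff g u \<Longrightarrow> v \<in> lsubdiff g u"
  unfolding lsubdiff_def
  by (intro CollectI conjI exI[of _ "\<lambda>_. u"] exI[of _ "\<lambda>_. v"])
    (auto simp: frechet_subdiff_def)

lemma frechet_subdiff_plus_ind:
  fixes F :: "'a::real_inner \<Rightarrow> real"
  assumes u: "u \<in> C" and M: "0 \<le> M"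
    and lower: "\<And>z. z \<in> C \<Longrightarrow> F u + G \<bullet> (z - u) - M * (norm (z - u))\<^sup>2 \<le> F z"
    and normal: "\<And>z. z \<in> C \<Longrightarrow> w \<bullet> (z - u) \<le> 0"
  shows "G + w \<in> frechet_subdiff (\<lambda>z. ereal (F z) + ind C z) u"
  unfolding frechet_subdiff_def
proof (intro CollectI conjI allI impI)
  show "\<bar>ereal (F u) + ind C u\<bar> \<noteq> \<infinity>" using u by (simp add: ind_def)
  fix \<epsilon> :: real assume \<epsilon>: "\<epsilon> > 0"
  show "\<exists>\<delta>>0. \<forall>z. 0 < norm (z - u) \<and> norm (z - u) < \<delta> \<longrightarrow>
      ereal (F z) + ind C z \<ge> ereal (F u) + ind C u + ereal ((G + w) \<bullet> (z - u) - \<epsilon> * norm (z - u))"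
  proof (intro exI[of _ "\<epsilon> / (M + 1)"] conjI allI impI)
    show "0 < \<epsilon> / (M + 1)" using \<epsilon> M by simp
    fix z assume z: "0 < norm (z - u) \<and> norm (z - u) < \<epsilon> / (M + 1)"
    show "ereal (F z) + ind C z \<ge> ereal (F u) + ind C u + ereal ((G + w) \<bullet> (z - u) - \<epsilon> * norm (z - u))"
    proof (cases "z \<in> C")
      case True
      have "M * norm (z - u) \<le> (M + 1) * norm (z - u)" by (simp add: distrib_right)
      also have "\<dots> \<le> \<epsilon>" using z M by (simp add: pos_less_divide_eq mult.commute less_imp_le)
      finally have "M * norm (z - u) \<le> \<epsilon>" .
      then have "M * (norm (z - u))\<^sup>2 \<le> \<epsilon> * norm (z - u)"
        by (simp add: power2_eq_square mult_right_mono flip: mult.assoc)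
      then show ?thesis
        using lower[OF True] normal[OF True] u True by (simp add: ind_def inner_add_left)
    qed (simp add: ind_def)
  qed
qed

lemma normal_cone_subset_lsubdiff_ind:
  assumes "u \<in> C" and "\<And>z. z \<in> C \<Longrightarrow> w \<bullet> (z - u) \<le> (0::real)"
  shows "w \<in> lsubdiff (ind C) u"
proof -
  have "0 + w \<in> frechet_subdiff (\<lambda>z. ereal 0 + ind C z) u"
    by (rule frechet_subdiff_plus_ind[where M = 0]) (use assms in simp_all)
  then show ?thesis by (simp add: frechet_subdiff_imp_lsubdiff)
qed

section \<open>Descent sequences of reals\<close>

lemma sufficient_decrease_imp_tendsto_zero:
  fixes a d :: "nat \<Rightarrow> real"
  assumes \<upsilon>: "0 < \<upsilon>" and bdd: "bdd_below (range a)"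
    and decrease: "\<And>k. \<upsilon> * (d k)\<^sup>2 \<le> a k - a (Suc k)"
  shows "d \<longlonglongrightarrow> 0"
proof -
  have "decseq a"
  proof (rule decseq_SucI)
    show "a (Suc k) \<le> a k" for k
      using decrease[of k] mult_nonneg_nonneg[OF less_imp_le[OF \<upsilon>] zero_le_power2[of "d k"]]
      by linarith
  qed
  then obtain l where "a \<longlonglongrightarrow> l"
    using bdd decseq_convergent unfolding bdd_below_def by (metis rangeI)
  then have "(\<lambda>k. (a k - a (Suc k)) / \<upsilon>) \<longlonglongrightarrow> (l - l) / \<upsilon>"
    using \<upsilon> by (intro tendsto_intros) (simp_all add: filterlim_sequentially_Suc)
  then have lim: "(\<lambda>k. (a k - a (Suc k)) / \<upsilon>) \<longlonglongrightarrow> 0" by simp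
  have bound: "\<forall>k. norm ((d k)\<^sup>2) \<le> (a k - a (Suc k)) / \<upsilon>"
    using decrease \<upsilon> by (simp add: pos_le_divide_eq mult.commute)
  have "(\<lambda>k. (d k)\<^sup>2) \<longlonglongrightarrow> 0"
    by (rule Lim_null_comparison[OF always_eventually[OF bound] lim])
  then have "(\<lambda>k. sqrt ((d k)\<^sup>2)) \<longlonglongrightarrow> sqrt 0" by (rule tendsto_real_sqrt)
  then show ?thesis by (simp add: tendsto_rabs_zero_iff)
qed

text \<open>With \<open>\<phi>(s) = c s\<^bsup>1-t\<^esup>\<close> the argument produces the constant \<open>c\<^sup>2 (1 - t)\<^sup>2 M\<^sup>2 / \<upsilon>\<close>; the
  theorem's \<open>\<gamma>\<close> has \<open>(1 - t)\<^sup>2\<close> in the denominator instead, which is larger since \<open>(1 - t)\<^sup>2 \<le> 1\<close>.\<close>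
lemma KL_powr_bound:
  fixes s c t g M n \<upsilon> D :: real
  assumes s: "0 < s" and t: "0 \<le> t" "t < 1" and c: "0 < c" and \<upsilon>: "0 < \<upsilon>"
    and KL: "1 \<le> c * (1 - t) * s powr (- t) * g" and g: "g \<le> M * n"
    and decrease: "\<upsilon> * n\<^sup>2 \<le> D"
  shows "s powr (2 * t) \<le> (c * M)\<^sup>2 / (\<upsilon> * (1 - t)\<^sup>2) * D"
proof -
  have "c * (1 - t) * s powr (- t) * g \<le> c * (1 - t) * s powr (- t) * (M * n)"
    using g c t by (intro mult_left_mono) simp_all
  then have "s powr t \<le> s powr t * (c * (1 - t) * s powr (- t) * (M * n))"
    using KL s by simp
  also have "\<dots> = c * (1 - t) * (M * n)"
    using s by (simp add: powr_minus field_simps)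
  finally have st: "s powr t \<le> c * (1 - t) * (M * n)" .
  have "(1 - t)\<^sup>2 * (1 - t)\<^sup>2 \<le> 1" using t by (intro mult_le_one) (simp_all add: power_le_one)
  then have t2: "(1 - t)\<^sup>2 \<le> 1 / (1 - t)\<^sup>2" using t by (simp add: field_simps)
  have D: "0 \<le> D" using decrease \<upsilon> by (meson order_trans mult_nonneg_nonneg zero_le_power2 less_imp_le)
  have "s powr (2 * t) = (s powr t)\<^sup>2" by (simp add: power2_eq_square flip: powr_add)
  also have "\<dots> \<le> (c * (1 - t) * (M * n))\<^sup>2" using st by (simp add: power_mono)
  also have "\<dots> = (c * M)\<^sup>2 / \<upsilon> * (1 - t)\<^sup>2 * (\<upsilon> * n\<^sup>2)"
    using \<upsilon> by (simp add: power_mult_distrib)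
  also have "\<dots> \<le> (c * M)\<^sup>2 / \<upsilon> * (1 - t)\<^sup>2 * D"
    using decrease \<upsilon> by (intro mult_left_mono) simp_all
  also have "\<dots> \<le> (c * M)\<^sup>2 / \<upsilon> * (1 / (1 - t)\<^sup>2) * D"
    using t2 \<upsilon> D by (intro mult_right_mono mult_left_mono) simp_all
  also have "\<dots> = (c * M)\<^sup>2 / (\<upsilon> * (1 - t)\<^sup>2) * D" by simp
  finally show ?thesis .
qed

lemma decseq_from_le:
  fixes e :: "nat \<Rightarrow> 'a::order"
  assumes dec: "\<And>k. m \<le> k \<Longrightarrow> e (Suc k) \<le> e k" and "m \<le> j" "j \<le> k"
  shows "e k \<le> e j"
  using \<open>j \<le> k\<close>
proof (induction k rule: dec_induct)
  case (step k)
  then show ?case using dec[of k] \<open>m \<le> j\<close> by simp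
qed simp

lemma powr_neg_increment_near:
  fixes s a p \<sigma> \<gamma> :: real
  assumes s: "0 < s" "s < a" and p: "p < 0" and \<sigma>: "\<sigma> < 1" and \<gamma>: "0 < \<gamma>"
    and step: "s powr (1 - p) \<le> \<gamma> * (a - s)" and near: "(1 - \<sigma>) * a \<le> s"
  shows "(- p) * (1 - \<sigma>) powr (1 - p) / \<gamma> \<le> s powr p - a powr p"
proof -
  have a: "0 < a" using s by simp
  have deriv: "\<And>z. s \<le> z \<Longrightarrow> z \<le> a \<Longrightarrow> ((\<lambda>z. z powr p) has_real_derivative p * z powr (p - 1)) (at z)"
    using s by (intro has_real_derivative_powr) simp
  obtain \<xi> where \<xi>: "s < \<xi>" "\<xi> < a" "a powr p - s powr p = (a - s) * (p * \<xi> powr (p - 1))"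
    using MVT2[OF \<open>s < a\<close> deriv] by blast
  have "(1 - \<sigma>) powr (1 - p) * a powr (1 - p) = ((1 - \<sigma>) * a) powr (1 - p)"
    using \<sigma> a by (simp add: powr_mult)
  also have "\<dots> \<le> s powr (1 - p)" using near \<sigma> a p by (intro powr_mono2) auto
  also have "\<dots> \<le> \<gamma> * (a - s)" by (rule step)
  finally have "(1 - \<sigma>) powr (1 - p) * a powr (1 - p) / \<gamma> \<le> a - s"
    using \<gamma> by (simp add: field_simps)
  then have "(1 - \<sigma>) powr (1 - p) * a powr (1 - p) / \<gamma> * ((- p) * a powr (p - 1))
      \<le> (a - s) * ((- p) * a powr (p - 1))"
    using p by (intro mult_right_mono) (simp_all add: mult_nonpos_nonneg)
  moreover have "(1 - \<sigma>) powr (1 - p) * a powr (1 - p) / \<gamma> * ((- p) * a powr (p - 1))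
      = (- p) * (1 - \<sigma>) powr (1 - p) / \<gamma> * (a powr (1 - p) * a powr (p - 1))"
    by (simp add: ac_simps)
  moreover have "a powr (1 - p) * a powr (p - 1) = 1"
    using a by (simp flip: powr_add)
  ultimately have "(- p) * (1 - \<sigma>) powr (1 - p) / \<gamma> \<le> (a - s) * ((- p) * a powr (p - 1))"
    by (metis mult.right_neutral)
  also have "\<dots> \<le> (a - s) * ((- p) * \<xi> powr (p - 1))"
    using powr_mono2'[of "p - 1" \<xi> a] \<xi> s p by (intro mult_left_mono) auto
  also have "\<dots> = s powr p - a powr p" using \<xi>(3) by (simp add: algebra_simps)
  finally show ?thesis .
qed

lemma powr_neg_increment_far:
  fixes s a p \<sigma> :: real
  assumes s: "0 < s" and p: "p < 0" and \<sigma>: "\<sigma> < 1" and far: "s < (1 - \<sigma>) * a"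
  shows "((1 - \<sigma>) powr p - 1) * a powr p \<le> s powr p - a powr p"
proof -
  have "0 < (1 - \<sigma>) * a" using s far by linarith
  then have a: "0 < a" using \<sigma> by (simp add: zero_less_mult_iff)
  have "(1 - \<sigma>) powr p * a powr p = ((1 - \<sigma>) * a) powr p" using \<sigma> a by (simp add: powr_mult)
  also have "\<dots> < s powr p" by (rule powr_less_mono2_neg[OF p s far])
  finally show ?thesis by (simp add: algebra_simps)
qed

lemma telescope_increment_le:
  fixes g :: "nat \<Rightarrow> real"
  assumes "i \<le> k" and "\<And>j. i \<le> j \<Longrightarrow> j \<le> k \<Longrightarrow> g j + c \<le> g (Suc j)"
  shows "g i + c * real (Suc k - i) \<le> g (Suc k)"
  using assms
proof (induction k rule: dec_induct)
  case (step k)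
  then have "g i + c * real (Suc k - i) \<le> g (Suc k)" by simp
  then show ?case using step.prems[of "Suc k"] step.hyps by (simp add: Suc_diff_le algebra_simps)
qed simp

context
  fixes e :: "nat \<Rightarrow> real" and \<gamma> t :: real and m :: nat
  assumes \<gamma>: "0 < \<gamma>"
    and nonneg: "\<And>k. m \<le> k \<Longrightarrow> 0 \<le> e k"
    and KL_step: "\<And>k. m \<le> k \<Longrightarrow> e (Suc k) powr (2 * t) \<le> \<gamma> * (e k - e (Suc k))"
begin

lemma KL_sequence_decreasing: "m \<le> k \<Longrightarrow> e (Suc k) \<le> e k"
  using order_trans[OF powr_ge_zero KL_step[of k]] \<gamma> by (simp add: zero_le_mult_iff)

lemma KL_sequence_le_initial: "m \<le> k \<Longrightarrow> e k \<le> e m"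
  using decseq_from_le[of m e, OF KL_sequence_decreasing] by blast

text \<open>For \<open>t = 0\<close> the hypothesis reads \<open>e (Suc k) powr 0 \<le> \<dots>\<close>, which is \<open>1\<close> unless
  \<open>e (Suc k) = 0\<close> (Isabelle's \<open>0 powr 0 = 0\<close>): the sequence drops by \<open>1 / \<gamma>\<close> until it hits \<open>0\<close>.\<close>
lemma KL_rate_exponent_zero:
  assumes "t = 0" and "m \<le> k"
  shows "e (Suc k) \<le> max 0 (e m - (1 / \<gamma>) * real (k - m + 1))"
proof -
  have drop: "e (Suc k) = 0 \<or> e (Suc k) \<le> e k - 1 / \<gamma>" if "m \<le> k" for k
    using KL_step[OF that] \<gamma> \<open>t = 0\<close> by (cases "e (Suc k) = 0") (auto simp: field_simps)
  show ?thesis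
    using \<open>m \<le> k\<close>
  proof (induction k rule: dec_induct)
    case base
    show ?case using drop[of m] by auto
  next
    case (step k)
    show ?case
    proof (cases "e (Suc (Suc k)) = 0")
      case False
      then have "e (Suc (Suc k)) \<le> e (Suc k) - 1 / \<gamma>" using drop[of "Suc k"] step by auto
      moreover have "0 \<le> e (Suc (Suc k))" using nonneg[of "Suc (Suc k)"] step by simp
      moreover have "0 < 1 / \<gamma>" using \<gamma> by simp
      ultimately have "e (Suc k) \<le> e m - (1 / \<gamma>) * real (k - m + 1)"
        using step.IH unfolding le_max_iff_disj by linarith
      then show ?thesis
        using \<open>e (Suc (Suc k)) \<le> e (Suc k) - 1 / \<gamma>\<close> step by (simp add: Suc_diff_le algebra_simps)
    qed simp
  qed
qed

text \<open>For \<open>t \<le> 1/2\<close> and \<open>e (Suc k) \<le> e m\<close>, the hypothesis gives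
  \<open>e (Suc k) * e m powr (2 t - 1) \<le> \<gamma> (e k - e (Suc k))\<close>: a fixed contraction factor.\<close>
lemma KL_rate_linear:
  assumes t: "0 < t" "t \<le> 1/2" and "m \<le> k"
  shows "e (Suc k) \<le> (1 - e m powr (2*t - 1) / (e m powr (2*t - 1) + \<gamma>)) ^ (k - m + 1) * e m"
proof -
  define a where "a = e m powr (2*t - 1)"
  define \<rho> where "\<rho> = 1 - a / (a + \<gamma>)"
  have a: "0 \<le> a" by (simp add: a_def)
  have \<rho>: "\<rho> = \<gamma> / (a + \<gamma>)" "0 \<le> \<rho>" using a \<gamma> by (simp_all add: \<rho>_def field_simps)
  have contraction: "e (Suc k) \<le> \<rho> * e k" if k: "m \<le> k" for k
  proof (cases "e (Suc k) = 0")
    case True then show ?thesis using \<rho>(2) nonneg[OF k] by simp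
  next
    case False
    define s where "s = e (Suc k)"
    have s: "0 < s" "s \<le> e m"
      using False nonneg[of "Suc k"] KL_sequence_le_initial[of "Suc k"] k by (auto simp: s_def)
    have "s * a \<le> s * s powr (2*t - 1)"
      using s t powr_mono2'[of "2*t - 1" s "e m"] by (simp add: a_def)
    also have "\<dots> = s powr (2 * t)" using s by (simp add: powr_mult_base)
    also have "\<dots> \<le> \<gamma> * (e k - s)" using KL_step[OF k] by (simp add: s_def)
    finally have "s * (a + \<gamma>) \<le> \<gamma> * e k" by (simp add: algebra_simps)
    then show ?thesis using a \<gamma> by (simp add: s_def \<rho> field_simps)
  qed
  have "e (Suc k) \<le> \<rho> ^ (k - m + 1) * e m"
    using \<open>m \<le> k\<close>
  proof (induction k rule: dec_induct)
    case base then show ?case using contraction[of m] by simp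
  next
    case (step k)
    have "e (Suc (Suc k)) \<le> \<rho> * e (Suc k)" using contraction[of "Suc k"] step by simp
    also have "\<dots> \<le> \<rho> * (\<rho> ^ (k - m + 1) * e m)"
      using step.IH \<rho>(2) by (rule mult_left_mono)
    finally show ?case using step by (simp add: Suc_diff_le)
  qed
  then show ?thesis by (simp add: \<rho>_def a_def)
qed

text \<open>For \<open>t > 1/2\<close> the function \<open>z powr (1 - 2 t)\<close> increases by at least \<open>2 q\<close> per step once
  \<open>e\<close> is small: either \<open>e (Suc k)\<close> is close to \<open>e k\<close> (mean value theorem) or it is far below
  it, and then \<open>e k powr (1 - 2 t)\<close> is already large.\<close>
lemma KL_powr_increment:
  assumes t: "1/2 < t" and \<sigma>: "0 < \<sigma>" "\<sigma> < 1" and lim: "e \<longlonglongrightarrow> 0"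
  defines "q \<equiv> (t - 1/2) * (1 - \<sigma>) powr (2*t) / \<gamma>"
  obtains k1 where "m \<le> k1"
    and "\<And>k. k1 \<le> k \<Longrightarrow> 0 < e (Suc k) \<Longrightarrow> e k powr (1 - 2*t) + 2 * q \<le> e (Suc k) powr (1 - 2*t)"
proof -
  define p where "p = 1 - 2*t"
  have p: "p < 0" "1 - p = 2 * t" using t by (simp_all add: p_def)
  have q: "0 < q" using t \<sigma> \<gamma> by (simp add: q_def)
  define D where "D = (1 - \<sigma>) powr p - 1"
  have "1 powr p < (1 - \<sigma>) powr p" using powr_less_mono2_neg[OF p(1), of "1 - \<sigma>" 1] \<sigma> by simp
  then have D: "0 < D" by (simp add: D_def)
  define \<delta> where "\<delta> = (2 * q / D) powr (1 / p)"
  have \<delta>: "0 < \<delta>" "\<delta> powr p = 2 * q / D" using p q D by (simp_all add: \<delta>_def powr_powr)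
  obtain N where N: "\<And>k. N \<le> k \<Longrightarrow> e k < \<delta>"
    using order_tendstoD(2)[OF lim \<delta>(1)] unfolding eventually_sequentially by blast
  show thesis
  proof (rule that[of "max N m"])
    fix k assume k: "max N m \<le> k" and pos: "0 < e (Suc k)"
    have step: "e (Suc k) powr (1 - p) \<le> \<gamma> * (e k - e (Suc k))" using KL_step[of k] k p by simp
    moreover have "0 < e (Suc k) powr (1 - p)" using pos by simp
    ultimately have "0 < \<gamma> * (e k - e (Suc k))" by linarith
    then have less: "e (Suc k) < e k" using \<gamma> by (simp add: zero_less_mult_iff)
    show "e k powr (1 - 2*t) + 2 * q \<le> e (Suc k) powr (1 - 2*t)"
    proof (cases "(1 - \<sigma>) * e k \<le> e (Suc k)")
      case True
      have "(- p) * (1 - \<sigma>) powr (1 - p) / \<gamma> = 2 * q"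
        using \<gamma> by (simp add: q_def p field_simps p_def)
      then show ?thesis
        using powr_neg_increment_near[OF pos less p(1) \<sigma>(2) \<gamma> step True] by (simp add: p_def)
    next
      case False
      have "\<delta> powr p < e k powr p"
        using powr_less_mono2_neg[OF p(1)] N[of k] k pos less by simp
      then have "2 * q < D * e k powr p" using \<delta>(2) D by (simp add: field_simps)
      moreover have "D * e k powr p \<le> e (Suc k) powr p - e k powr p"
        using powr_neg_increment_far[OF pos p(1) \<sigma>(2), of "e k"] False by (simp add: D_def)
      ultimately show ?thesis by (simp add: p_def)
    qed
  qed simp
qed

lemma KL_rate_sublinear:
  assumes t: "1/2 < t" and \<sigma>: "0 < \<sigma>" "\<sigma> < 1" and lim: "e \<longlonglongrightarrow> 0"
  shows "\<forall>\<^sub>F k in sequentially. e (Suc k) \<le> (e m powr (1 - 2*t)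
            + ((t - 1/2) * (1 - \<sigma>) powr (2*t) / \<gamma>) * real (k - m + 1)) powr (1 / (1 - 2*t))"
proof -
  define p where "p = 1 - 2*t"
  define q where "q = (t - 1/2) * (1 - \<sigma>) powr (2*t) / \<gamma>"
  have p: "p < 0" using t by (simp add: p_def)
  have q: "0 < q" using t \<sigma> \<gamma> by (simp add: q_def)
  obtain k1 where k1: "m \<le> k1"
    and incr: "\<And>k. k1 \<le> k \<Longrightarrow> 0 < e (Suc k) \<Longrightarrow> e k powr p + 2 * q \<le> e (Suc k) powr p"
    using KL_powr_increment[OF t \<sigma> lim] unfolding p_def q_def by blast
  have "e (Suc k) \<le> (e m powr p + q * real (k - m + 1)) powr (1 / p)" if k: "2 * k1 \<le> k" for k
  proof (cases "0 < e (Suc k)")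
    case True
    have "e (Suc k) \<le> e k1"
      using decseq_from_le[of m e k1 "Suc k", OF KL_sequence_decreasing] k k1 by simp
    then have "0 < e k1" using True by simp
    then have "e m powr p \<le> e k1 powr p"
      using powr_mono2'[OF less_imp_le[OF p]] KL_sequence_le_initial[OF k1] by blast
    moreover have "q * real (k - m + 1) \<le> 2 * q * real (Suc k - k1)"
      using k q by (simp add: mult_left_mono)
    moreover have "e k1 powr p + 2 * q * real (Suc k - k1) \<le> e (Suc k) powr p"
    proof (rule telescope_increment_le)
      fix j assume "k1 \<le> j" "j \<le> k"
      moreover from this have "e (Suc k) \<le> e (Suc j)"
        using decseq_from_le[of m e, OF KL_sequence_decreasing] k1 by simp
      ultimately show "e j powr p + 2 * q \<le> e (Suc j) powr p" using incr True by simp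
    qed (use k in simp)
    ultimately have base: "e m powr p + q * real (k - m + 1) \<le> e (Suc k) powr p"
      by simp
    have "e (Suc k) = (e (Suc k) powr p) powr (1 / p)" using p True by (simp add: powr_powr)
    also have "\<dots> \<le> (e m powr p + q * real (k - m + 1)) powr (1 / p)"
      using base p q by (intro powr_mono2') (auto intro: add_nonneg_pos)
    finally show ?thesis .
  next
    case False
    then show ?thesis by (meson not_less order_trans powr_ge_zero)
  qed
  then show ?thesis
    unfolding eventually_sequentially p_def q_def by blast
qed

end

section \<open>The GKSM iteration\<close>

text \<open>Of the subspace update the analysis needs only the nesting of the column spaces.\<close>
locale gksm =
  fixes A :: "complex ^ 'n ^ 'm" and y :: "complex ^ 'm"
    and f :: "complex ^ 'n \<Rightarrow> real" and gf :: "complex ^ 'n \<Rightarrow> complex ^ 'n"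
    and L :: real and C :: "(complex ^ 'n) set" and K :: nat
    and \<alpha> :: "nat \<Rightarrow> real" and \<alpha>min \<alpha>max :: real
    and B :: "nat \<Rightarrow> complex ^ 'n ^ 'n" and \<eta>l \<eta>u :: real
    and V :: "nat \<Rightarrow> (complex ^ 'n) list" and x :: "nat \<Rightarrow> complex ^ 'n"
    and F :: "complex ^ 'n \<Rightarrow> real" and FC :: "complex ^ 'n \<Rightarrow> ereal"
    and Fbar :: "nat \<Rightarrow> complex ^ 'n \<Rightarrow> real"
    and S :: "nat \<Rightarrow> (complex ^ 'n) set" and r :: "nat \<Rightarrow> complex ^ 'n"
    and \<upsilon> :: real
  assumes f_grad: "\<And>z. (f has_derivative (\<lambda>h. gf z \<bullet> h)) (at z)"
    and f_bdd: "bdd_below (range f)"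
    and L_pos: "0 < L"
    and gf_lip: "\<And>z1 z2. norm (gf z1 - gf z2) \<le> L * norm (z1 - z2)"
    and C_closed: "closed C" and C_convex: "convex C"
    and F_def: "\<And>z. F z = (1/2) * (norm (A *v z - y))\<^sup>2 + f z"
    and FC_def: "\<And>z. FC z = ereal (F z) + ind C z"
    and eta_pos: "0 < \<eta>l" and eta_le: "\<eta>l \<le> \<eta>u"
    and B_herm: "\<And>k. 1 \<le> k \<Longrightarrow> hermitian (B k)"
    and B_lower: "\<And>k v. 1 \<le> k \<Longrightarrow> \<eta>l * (norm v)\<^sup>2 \<le> mnorm2 (B k) v"
    and B_upper: "\<And>k v. 1 \<le> k \<Longrightarrow> mnorm2 (B k) v \<le> \<eta>u * (norm v)\<^sup>2"
    and alpha_min_pos: "0 < \<alpha>min"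
    and alpha_bounds: "\<And>k. 1 \<le> k \<Longrightarrow> \<alpha>min \<le> \<alpha> k \<and> \<alpha> k \<le> \<alpha>max"
    and alpha_max_less: "\<alpha>max < 2 * \<eta>l / (\<eta>l + L)"
    and upsilon_def: "\<upsilon> = \<eta>l / \<alpha>max - (\<eta>l + L) / 2"
    and x1: "x 1 \<in> C \<inter> colspace (V 1)"
    and Fbar_def: "\<And>k z. 1 \<le> k \<Longrightarrow> Fbar k z = (1/2) * (norm (A *v z - y))\<^sup>2 + gf (x k) \<bullet> z
                      + 1 / (2 * \<alpha> k) * mnorm2 (B k) (z - x k)"
    and S_def: "\<And>k. 1 \<le> k \<Longrightarrow> S k = (if k \<le> K + 1 then colspace (V k) else UNIV)"
    and x_min: "\<And>k. 1 \<le> k \<Longrightarrow> x (Suc k) \<in> C \<inter> S k"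
      "\<And>k z. 1 \<le> k \<Longrightarrow> z \<in> C \<inter> S k \<Longrightarrow> Fbar k (x (Suc k)) \<le> Fbar k z"
    and r_def: "\<And>k. 1 \<le> k \<Longrightarrow> r k = cadj A *v (A *v x (Suc k) - y) + gf (x k)
                   + (1 / \<alpha> k) *\<^sub>R (B k *v (x (Suc k) - x k))"
    and V_nested: "\<And>k. 1 \<le> k \<Longrightarrow> k \<le> K \<Longrightarrow> colspace (V k) \<subseteq> colspace (V (Suc k))"
begin

abbreviation gradF :: "complex ^ 'n \<Rightarrow> complex ^ 'n" where
  "gradF z \<equiv> cadj A *v (A *v z - y) + gf z"

definition grad_Fbar :: "nat \<Rightarrow> complex ^ 'n \<Rightarrow> complex ^ 'n" where
  "grad_Fbar k u = cadj A *v (A *v u - y) + gf (x k) + (1 / \<alpha> k) *\<^sub>R (B k *v (u - x k))"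

lemma r_eq_grad_Fbar: "1 \<le> k \<Longrightarrow> r k = grad_Fbar k (x (Suc k))"
  by (simp add: r_def grad_Fbar_def)

lemma alpha_pos: "1 \<le> k \<Longrightarrow> 0 < \<alpha> k"
  using alpha_bounds alpha_min_pos by (meson less_le_trans)

lemma upsilon_le: "1 \<le> k \<Longrightarrow> \<upsilon> \<le> \<eta>l / \<alpha> k - L / 2"
proof -
  assume k: "1 \<le> k"
  have "\<eta>l / \<alpha>max \<le> \<eta>l / \<alpha> k"
    using alpha_bounds[OF k] alpha_pos[OF k] eta_pos by (intro divide_left_mono) simp_all
  then show ?thesis using eta_pos by (simp add: upsilon_def add_divide_distrib)
qed

lemma upsilon_pos: "0 < \<upsilon>"
proof -
  have "0 < \<alpha>max" using alpha_bounds[of 1] alpha_pos[of 1] by simp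
  moreover have "\<alpha>max * (\<eta>l + L) < 2 * \<eta>l"
    using alpha_max_less eta_pos L_pos by (simp add: pos_less_divide_eq)
  ultimately show ?thesis by (simp add: upsilon_def field_simps)
qed

lemma x_in_C: "1 \<le> k \<Longrightarrow> x k \<in> C"
  using x1 x_min(1)[of "k - 1"] by (cases "k = 1") auto

lemma x_in_S: "1 \<le> k \<Longrightarrow> x k \<in> S k"
proof (induction k rule: nat_induct_at_least)
  case base
  then show ?case using x1 S_def by simp
next
  case (Suc k)
  show ?case
  proof (cases "Suc k \<le> K + 1")
    case True
    then have "x (Suc k) \<in> colspace (V k)" using x_min(1)[of k] S_def[of k] Suc by simp
    then show ?thesis using V_nested[of k] S_def[of "Suc k"] Suc True by auto
  qed (simp add: S_def)
qed

lemma convex_C_inter_S: "1 \<le> k \<Longrightarrow> convex (C \<inter> S k)"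
  using C_convex S_def[of k]
  by (cases "k \<le> K + 1") (simp_all add: convex_Int subspace_imp_convex subspace_colspace)

lemma S_eq_UNIV: "K + 2 \<le> k \<Longrightarrow> S k = UNIV"
  using S_def[of k] by simp

lemma Fbar_expand:
  assumes "1 \<le> k"
  shows "Fbar k (u + d) = Fbar k u + grad_Fbar k u \<bullet> d
           + ((1/2) * (norm (A *v d))\<^sup>2 + 1 / (2 * \<alpha> k) * mnorm2 (B k) d)"
proof -
  have B: "mnorm2 (B k) (u + d - x k) = mnorm2 (B k) (u - x k) + 2 * ((B k *v (u - x k)) \<bullet> d) + mnorm2 (B k) d"
    using mnorm2_add[OF B_herm[OF assms], of "u - x k" d] by (simp add: algebra_simps)
  have grad: "grad_Fbar k u \<bullet> d = (cadj A *v (A *v u - y)) \<bullet> d + gf (x k) \<bullet> d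
      + (1 / \<alpha> k) * ((B k *v (u - x k)) \<bullet> d)"
    by (simp add: grad_Fbar_def inner_add_left)
  show ?thesis
    using Fbar_def[OF assms, of "u + d"] Fbar_def[OF assms, of u] residual_norm_sq_add[of A u d y]
      B grad alpha_pos[OF assms]
    by (simp add: inner_add_right field_simps)
qed

lemma r_variational_ineq:
  assumes k: "1 \<le> k" and w: "w \<in> C \<inter> S k"
  shows "0 \<le> r k \<bullet> (w - x (Suc k))"
proof (rule min_on_convex_imp_variational_ineq[OF convex_C_inter_S[OF k] x_min(1)[OF k] w])
  show "Fbar k (x (Suc k)) \<le> Fbar k z" if "z \<in> C \<inter> S k" for z
    using x_min(2)[OF k that] .
  fix s :: real
  let ?d = "w - x (Suc k)"
  have "(1/2) * (norm (A *v (s *\<^sub>R d)))\<^sup>2 + 1 / (2 * \<alpha> k) * mnorm2 (B k) (s *\<^sub>R d)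
      = s\<^sup>2 * ((1/2) * (norm (A *v d))\<^sup>2 + 1 / (2 * \<alpha> k) * mnorm2 (B k) d)" for d
    by (simp add: complex_matrix_vector_mult_scaleR mnorm2_scaleR power_mult_distrib algebra_simps)
  then show "Fbar k (x (Suc k) + s *\<^sub>R ?d) = Fbar k (x (Suc k)) + s * (r k \<bullet> ?d)
      + s\<^sup>2 * ((1/2) * (norm (A *v ?d))\<^sup>2 + 1 / (2 * \<alpha> k) * mnorm2 (B k) ?d)"
    by (simp only: Fbar_expand[OF k] r_eq_grad_Fbar[OF k] inner_scaleR_right)
qed

lemma Fbar_proximal_lower: "1 \<le> k \<Longrightarrow> \<eta>l * (norm d)\<^sup>2 / (2 * \<alpha> k) \<le> 1 / (2 * \<alpha> k) * mnorm2 (B k) d"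
  using B_lower[of k d] alpha_pos[of k] by (simp add: divide_right_mono)

lemma Fbar_decrease:
  assumes k: "1 \<le> k"
  shows "Fbar k (x (Suc k)) + \<eta>l * (norm (x (Suc k) - x k))\<^sup>2 / (2 * \<alpha> k) \<le> Fbar k (x k)"
proof -
  define d where "d = x k - x (Suc k)"
  have d: "norm (x (Suc k) - x k) = norm d" by (simp add: d_def norm_minus_commute)
  have "0 \<le> r k \<bullet> d"
    using r_variational_ineq[OF k] x_in_C[OF k] x_in_S[OF k] by (simp add: d_def)
  moreover have "Fbar k (x k) = Fbar k (x (Suc k)) + r k \<bullet> d
      + ((1/2) * (norm (A *v d))\<^sup>2 + 1 / (2 * \<alpha> k) * mnorm2 (B k) d)"
    using Fbar_expand[OF k, of "x (Suc k)" d] by (simp add: d_def r_eq_grad_Fbar[OF k])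
  ultimately show ?thesis
    unfolding d using Fbar_proximal_lower[OF k, of d] zero_le_power2[of "norm (A *v d)"] by linarith
qed

lemma sufficient_decrease:
  assumes k: "1 \<le> k"
  shows "F (x (Suc k)) + \<upsilon> * (norm (x (Suc k) - x k))\<^sup>2 \<le> F (x k)"
proof -
  define u where "u = x (Suc k)"
  define v where "v = x k"
  define n where "n = norm (u - v)"
  have "Fbar k u + \<eta>l * n\<^sup>2 / (2 * \<alpha> k) \<le> Fbar k v"
    using Fbar_decrease[OF k] by (simp add: u_def v_def n_def)
  moreover have "Fbar k v = (1/2) * (norm (A *v v - y))\<^sup>2 + gf v \<bullet> v"
    using Fbar_def[OF k] by (simp add: v_def mnorm2_eq_inner)
  moreover have "(1/2) * (norm (A *v u - y))\<^sup>2 + gf v \<bullet> u + \<eta>l * n\<^sup>2 / (2 * \<alpha> k) \<le> Fbar k u"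
    using Fbar_def[OF k] Fbar_proximal_lower[OF k, of "u - v"] by (simp add: v_def n_def)
  moreover have "f u \<le> f v + gf v \<bullet> (u - v) + L / 2 * n\<^sup>2"
    using lipschitz_gradient_upper_bound[OF f_grad gf_lip, of v "u - v"] by (simp add: n_def)
  moreover have "\<upsilon> * n\<^sup>2 \<le> (\<eta>l / \<alpha> k - L / 2) * n\<^sup>2"
    using upsilon_le[OF k] by (simp add: mult_right_mono)
  moreover have "(\<eta>l / \<alpha> k - L / 2) * n\<^sup>2 = 2 * (\<eta>l * n\<^sup>2 / (2 * \<alpha> k)) - L / 2 * n\<^sup>2"
    by (simp add: field_simps)
  moreover have "gf v \<bullet> (u - v) = gf v \<bullet> u - gf v \<bullet> v" by (rule inner_diff_right)
  ultimately have "F u + \<upsilon> * n\<^sup>2 \<le> F v"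
    using F_def[of u] F_def[of v] by linarith
  then show ?thesis by (simp add: u_def v_def n_def)
qed

lemma F_decreasing: "1 \<le> k \<Longrightarrow> F (x (Suc k)) \<le> F (x k)"
  using sufficient_decrease[of k]
    mult_nonneg_nonneg[OF less_imp_le[OF upsilon_pos] zero_le_power2[of "norm (x (Suc k) - x k)"]]
  by linarith

lemma F_antimono: "1 \<le> j \<Longrightarrow> j \<le> k \<Longrightarrow> F (x k) \<le> F (x j)"
  using decseq_from_le[of 1 "\<lambda>k. F (x k)", OF F_decreasing] by blast

lemma F_bdd_below: "bdd_below (range F)"
proof -
  obtain m where m: "\<And>z. m \<le> f z" using f_bdd by (auto simp: bdd_below_def)
  have "m \<le> F z" for z
    using m[of z] zero_le_power2[of "norm (A *v z - y)"] F_def[of z] by linarith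
  then show ?thesis by (auto simp: bdd_below_def)
qed

lemma F_lower_model: "F u + gradF u \<bullet> d - L / 2 * (norm d)\<^sup>2 \<le> F (u + d)"
  using lipschitz_gradient_lower_bound[OF f_grad gf_lip, of u d] residual_norm_sq_add[of A u d y]
    zero_le_power2[of "norm (A *v d)"] F_def[of u] F_def[of "u + d"]
    inner_add_left[of "cadj A *v (A *v u - y)" "gf u" d]
  by linarith

lemma gradF_plus_normal_in_lsubdiff:
  assumes "u \<in> C" and "\<And>z. z \<in> C \<Longrightarrow> w \<bullet> (z - u) \<le> 0"
  shows "gradF u + w \<in> lsubdiff FC u"
proof -
  have "FC = (\<lambda>z. ereal (F z) + ind C z)" by (simp add: FC_def fun_eq_iff)
  moreover have "gradF u + w \<in> frechet_subdiff (\<lambda>z. ereal (F z) + ind C z) u"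
  proof (rule frechet_subdiff_plus_ind[OF assms(1) _ _ assms(2)])
    show "0 \<le> L / 2" using L_pos by simp
    show "F u + gradF u \<bullet> (z - u) - L / 2 * (norm (z - u))\<^sup>2 \<le> F z" for z
      using F_lower_model[of u "z - u"] by simp
  qed
  ultimately show ?thesis by (simp add: frechet_subdiff_imp_lsubdiff)
qed

lemma isCont_gf: "isCont gf z"
proof -
  have "L-lipschitz_on UNIV gf" using gf_lip L_pos by (intro lipschitz_onI) (simp_all add: dist_norm)
  then show ?thesis using lipschitz_on_continuous_on continuous_on_eq_continuous_at by blast
qed

lemma isCont_F: "isCont F z"
proof -
  have "F = (\<lambda>z. (1/2) * (norm (A *v z - y))\<^sup>2 + f z)" by (simp add: F_def fun_eq_iff)
  moreover have "isCont f z" using f_grad has_derivative_continuous by blast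
  ultimately show ?thesis by (simp add: continuous_intros)
qed

lemma isCont_gradF: "isCont gradF z"
  using isCont_gf
  by (intro continuous_intros bounded_linear.isCont[OF matrix_vector_mul_bounded_linear])

lemma step_length_tendsto_zero: "(\<lambda>k. norm (x (Suc k) - x k)) \<longlonglongrightarrow> 0"
proof -
  have "(\<lambda>k. norm (x (Suc (Suc k)) - x (Suc k))) \<longlonglongrightarrow> 0"
  proof (rule sufficient_decrease_imp_tendsto_zero[OF upsilon_pos])
    show "bdd_below (range (\<lambda>k. F (x (Suc k))))"
      using F_bdd_below by (rule bdd_below_mono) auto
    show "\<upsilon> * (norm (x (Suc (Suc k)) - x (Suc k)))\<^sup>2 \<le> F (x (Suc k)) - F (x (Suc (Suc k)))" for k
      using sufficient_decrease[of "Suc k"] by simp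
  qed
  then show ?thesis by (rule LIMSEQ_imp_Suc)
qed

lemma norm_gradF_minus_r_le:
  assumes k: "1 \<le> k"
  shows "norm (gradF (x (Suc k)) - r k) \<le> (L + \<eta>u / \<alpha> k) * norm (x (Suc k) - x k)"
proof -
  define d where "d = x (Suc k) - x k"
  have \<alpha>: "0 < \<alpha> k" using alpha_pos[OF k] .
  have B: "norm (B k *v d) \<le> \<eta>u * norm d"
    using B_lower[OF k] B_upper[OF k] eta_pos
    by (intro norm_hermitian_mult_le[OF B_herm[OF k]]) (meson order_trans mult_nonneg_nonneg
      zero_le_power2 less_imp_le)
  have "gradF (x (Suc k)) - r k = (gf (x (Suc k)) - gf (x k)) - (1 / \<alpha> k) *\<^sub>R (B k *v d)"
    using r_def[OF k] by (simp add: d_def algebra_simps)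
  then have "norm (gradF (x (Suc k)) - r k)
      \<le> norm (gf (x (Suc k)) - gf (x k)) + norm ((1 / \<alpha> k) *\<^sub>R (B k *v d))"
    by (simp only: norm_triangle_ineq4)
  also have "\<dots> \<le> L * norm d + \<eta>u * norm d / \<alpha> k"
    using gf_lip[of "x (Suc k)" "x k"] B \<alpha> by (intro add_mono) (simp_all add: d_def divide_right_mono)
  finally show ?thesis by (simp add: d_def algebra_simps)
qed

lemma subseq_limit_in_C:
  assumes "strict_mono \<sigma>" and "(\<lambda>j. x (\<sigma> j)) \<longlonglongrightarrow> l"
  shows "l \<in> C"
proof (rule Lim_in_closed_set[OF C_closed _ trivial_limit_sequentially assms(2)])
  show "\<forall>\<^sub>F j in sequentially. x (\<sigma> j) \<in> C"
    unfolding eventually_sequentially using seq_suble[OF assms(1)] x_in_C by (meson le_trans)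
qed

lemma subseq_residual_tendsto:
  assumes \<sigma>: "strict_mono \<sigma>" and x\<sigma>: "(\<lambda>j. x (\<sigma> j)) \<longlonglongrightarrow> l"
  shows "(\<lambda>j. x (Suc (\<sigma> j))) \<longlonglongrightarrow> l" and "(\<lambda>j. r (\<sigma> j)) \<longlonglongrightarrow> gradF l"
proof -
  have step: "(\<lambda>j. norm (x (Suc (\<sigma> j)) - x (\<sigma> j))) \<longlonglongrightarrow> 0"
    using LIMSEQ_subseq_LIMSEQ[OF step_length_tendsto_zero \<sigma>] by (simp add: o_def)
  then show x\<sigma>1: "(\<lambda>j. x (Suc (\<sigma> j))) \<longlonglongrightarrow> l"
    using tendsto_add[OF x\<sigma> tendsto_norm_zero_cancel[OF step]] by simp
  have "(\<lambda>j. gradF (x (Suc (\<sigma> j))) - r (\<sigma> j)) \<longlonglongrightarrow> 0"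
  proof (rule Lim_null_comparison)
    show "\<forall>\<^sub>F j in sequentially. norm (gradF (x (Suc (\<sigma> j))) - r (\<sigma> j))
        \<le> (L + \<eta>u / \<alpha>min) * norm (x (Suc (\<sigma> j)) - x (\<sigma> j))"
      using eventually_ge_at_top[of 1]
    proof eventually_elim
      case (elim j)
      then have j: "1 \<le> \<sigma> j" using seq_suble[OF \<sigma>, of j] by simp
      have "\<eta>u / \<alpha> (\<sigma> j) \<le> \<eta>u / \<alpha>min"
        using alpha_bounds[OF j] alpha_min_pos eta_pos eta_le by (intro divide_left_mono) simp_all
      with norm_gradF_minus_r_le[OF j] show ?case
        by (meson add_left_mono mult_right_mono norm_ge_zero order_trans)
    qed
    show "(\<lambda>j. (L + \<eta>u / \<alpha>min) * norm (x (Suc (\<sigma> j)) - x (\<sigma> j))) \<longlonglongrightarrow> 0"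
      using tendsto_mult_right_zero[OF step] .
  qed
  from tendsto_diff[OF isCont_tendsto_compose[OF isCont_gradF x\<sigma>1] this]
  show "(\<lambda>j. r (\<sigma> j)) \<longlonglongrightarrow> gradF l" by simp
qed

lemma cluster_point_critical:
  assumes \<sigma>: "strict_mono \<sigma>" and lim: "(x \<circ> \<sigma>) \<longlonglongrightarrow> xh"
  shows "\<exists>v\<in>lsubdiff (ind C) xh. gradF xh + v = 0"
proof -
  have x\<sigma>: "(\<lambda>j. x (\<sigma> j)) \<longlonglongrightarrow> xh" using lim by (simp add: o_def)
  note x\<sigma>1 = subseq_residual_tendsto(1)[OF \<sigma> x\<sigma>] and r\<sigma> = subseq_residual_tendsto(2)[OF \<sigma> x\<sigma>]
  have late: "\<forall>\<^sub>F j in sequentially. K + 2 \<le> \<sigma> j"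
    unfolding eventually_sequentially using seq_suble[OF \<sigma>] by (meson le_trans)
  have nonneg: "0 \<le> gradF xh \<bullet> (z - xh)" if z: "z \<in> C" for z
  proof (rule tendsto_lowerbound)
    show "(\<lambda>j. r (\<sigma> j) \<bullet> (z - x (Suc (\<sigma> j)))) \<longlonglongrightarrow> gradF xh \<bullet> (z - xh)"
      by (intro tendsto_inner r\<sigma> tendsto_diff tendsto_const x\<sigma>1)
    show "\<forall>\<^sub>F j in sequentially. 0 \<le> r (\<sigma> j) \<bullet> (z - x (Suc (\<sigma> j)))"
      using late by eventually_elim (simp add: r_variational_ineq z S_eq_UNIV)
  qed simp
  have "- gradF xh \<in> lsubdiff (ind C) xh"
  proof (rule normal_cone_subset_lsubdiff_ind[OF subseq_limit_in_C[OF \<sigma> x\<sigma>]])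
    show "(- gradF xh) \<bullet> (z - xh) \<le> 0" if "z \<in> C" for z
      using nonneg[OF that] by (simp only: inner_minus_left neg_le_0_iff_le)
  qed
  then show ?thesis by force
qed

definition KL_gamma :: "real \<Rightarrow> real \<Rightarrow> real" where
  "KL_gamma c t = (SUP k\<in>{1..}. (c * (L * \<alpha> k + \<eta>u))\<^sup>2 / (\<upsilon> * (1 - t)\<^sup>2 * (\<alpha> k)\<^sup>2))"

lemma KL_gamma_upper:
  assumes c: "0 < c" and t: "t < 1" and k: "1 \<le> k"
  shows "(c * (L * \<alpha> k + \<eta>u))\<^sup>2 / (\<upsilon> * (1 - t)\<^sup>2 * (\<alpha> k)\<^sup>2) \<le> KL_gamma c t"
  unfolding KL_gamma_def
proof (rule cSUP_upper)
  show "k \<in> {1..}" using k by simp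
  have "(c * (L * \<alpha> j + \<eta>u))\<^sup>2 / (\<upsilon> * (1 - t)\<^sup>2 * (\<alpha> j)\<^sup>2)
      \<le> (c * (L * \<alpha>max + \<eta>u))\<^sup>2 / (\<upsilon> * (1 - t)\<^sup>2 * \<alpha>min\<^sup>2)" if j: "1 \<le> j" for j
  proof (rule frac_le)
    have \<alpha>: "\<alpha>min \<le> \<alpha> j" "\<alpha> j \<le> \<alpha>max" using alpha_bounds[OF j] by auto
    show "(c * (L * \<alpha> j + \<eta>u))\<^sup>2 \<le> (c * (L * \<alpha>max + \<eta>u))\<^sup>2"
      using \<alpha> c L_pos alpha_pos[OF j] eta_pos eta_le
      by (intro power_mono mult_left_mono add_right_mono) simp_all
    show "0 < \<upsilon> * (1 - t)\<^sup>2 * \<alpha>min\<^sup>2" using upsilon_pos t alpha_min_pos by simp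
    show "\<upsilon> * (1 - t)\<^sup>2 * \<alpha>min\<^sup>2 \<le> \<upsilon> * (1 - t)\<^sup>2 * (\<alpha> j)\<^sup>2"
      using \<alpha> alpha_min_pos upsilon_pos by (intro mult_left_mono power_mono) simp_all
  qed simp
  then show "bdd_above ((\<lambda>j. (c * (L * \<alpha> j + \<eta>u))\<^sup>2 / (\<upsilon> * (1 - t)\<^sup>2 * (\<alpha> j)\<^sup>2)) ` {1..})"
    by (intro bdd_aboveI2) auto
qed

lemma KL_gamma_pos:
  assumes "0 < c" "t < 1"
  shows "0 < KL_gamma c t"
proof -
  have "0 < L * \<alpha> 1 + \<eta>u"
    using alpha_pos[of 1] L_pos eta_pos eta_le by (intro add_pos_pos mult_pos_pos) simp_all
  then have "0 < (c * (L * \<alpha> 1 + \<eta>u))\<^sup>2 / (\<upsilon> * (1 - t)\<^sup>2 * (\<alpha> 1)\<^sup>2)"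
    using assms alpha_pos[of 1] upsilon_pos by simp
  then show ?thesis using KL_gamma_upper[OF assms, of 1] by linarith
qed

text \<open>For \<open>k \<ge> K + 2\<close> the subproblem is posed on all of \<open>C\<close>, so \<open>gradF (x (Suc k)) - r k\<close> is a
  subgradient of \<open>FC\<close> at \<open>x (Suc k)\<close>; the KL inequality bounds its norm from below.\<close>
lemma KL_descent_step:
  assumes KL: "KL_power_at FC xs c t \<eta> U" and c: "0 < c" and t: "0 \<le> t" "t < 1"
    and xs: "xs \<in> C" and k: "K + 2 \<le> k" and U: "x (Suc k) \<in> U"
    and near: "0 < F (x (Suc k)) - F xs" "F (x (Suc k)) - F xs < \<eta>"
  shows "(F (x (Suc k)) - F xs) powr (2 * t) \<le> KL_gamma c t * (F (x k) - F (x (Suc k)))"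
proof -
  define u where "u = x (Suc k)"
  define s where "s = F u - F xs"
  have k1: "1 \<le> k" using k by simp
  have \<alpha>: "0 < \<alpha> k" using alpha_pos[OF k1] .
  have "gradF u + - r k \<in> lsubdiff FC u"
    using x_min(1)[OF k1] r_variational_ineq[OF k1] S_eq_UNIV[OF k]
    by (intro gradF_plus_normal_in_lsubdiff) (simp_all add: u_def inner_minus_left)
  moreover have FC: "\<bar>FC u - FC xs\<bar> = ereal s"
    using x_min(1)[OF k1] xs near by (simp add: FC_def ind_def u_def s_def)
  moreover have "0 < \<bar>FC u - FC xs\<bar> \<and> \<bar>FC u - FC xs\<bar> < ereal \<eta>"
    using FC near by (simp add: s_def u_def)
  then have "\<forall>v\<in>lsubdiff FC u. 1 \<le> c * (1 - t) * real_of_ereal \<bar>FC u - FC xs\<bar> powr (- t) * norm v"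
    using KL U unfolding KL_power_at_def u_def by blast
  ultimately have KL_ineq: "1 \<le> c * (1 - t) * s powr (- t) * norm (gradF u - r k)"
    by simp
  have "s powr (2 * t) \<le> (c * (L + \<eta>u / \<alpha> k))\<^sup>2 / (\<upsilon> * (1 - t)\<^sup>2) * (F (x k) - F u)"
    using near t c upsilon_pos KL_ineq norm_gradF_minus_r_le[OF k1] sufficient_decrease[OF k1]
    by (intro KL_powr_bound) (simp_all add: u_def s_def add.commute le_diff_eq)
  also have "(c * (L + \<eta>u / \<alpha> k))\<^sup>2 / (\<upsilon> * (1 - t)\<^sup>2)
      = (c * (L * \<alpha> k + \<eta>u))\<^sup>2 / (\<upsilon> * (1 - t)\<^sup>2 * (\<alpha> k)\<^sup>2)"
    using \<alpha> by (simp add: field_simps power2_eq_square)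
  also have "\<dots> * (F (x k) - F u) \<le> KL_gamma c t * (F (x k) - F u)"
    using KL_gamma_upper[OF c t(2) k1] F_decreasing[OF k1]
    by (intro mult_right_mono) (simp_all add: u_def)
  finally show ?thesis by (simp add: u_def s_def)
qed

lemma F_tendsto: "X \<longlonglongrightarrow> l \<Longrightarrow> (\<lambda>k. F (X k)) \<longlonglongrightarrow> F l"
  by (rule isCont_tendsto_compose[OF isCont_F])

lemma F_limit_le:
  assumes "x \<longlonglongrightarrow> l" and "1 \<le> k"
  shows "F l \<le> F (x k)"
  using F_tendsto[OF assms(1)] F_antimono[OF assms(2)] by (intro LIMSEQ_le_const2) auto

lemma eventually_in_KL_region:
  assumes lim: "x \<longlonglongrightarrow> xs" and c: "0 < c" and t: "0 \<le> t" "t < 1" and \<Lambda>: "0 < \<Lambda>"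
    and U: "cball xs \<Lambda> \<subseteq> U" and KL: "KL_power_at FC xs c t \<eta> U"
  obtains K' where "K + 1 < K'"
    and "\<And>k. K' \<le> k \<Longrightarrow> x k \<in> cball xs \<Lambda> \<and> \<bar>FC (x k) - ereal (F xs)\<bar> < ereal \<eta>"
    and "\<And>k. K' \<le> k \<Longrightarrow> 0 \<le> F (x k) - F xs"
    and "\<And>k. K' \<le> k \<Longrightarrow> (F (x (Suc k)) - F xs) powr (2 * t)
           \<le> KL_gamma c t * ((F (x k) - F xs) - (F (x (Suc k)) - F xs))"
proof -
  have \<eta>: "0 < \<eta>" using KL by (simp add: KL_power_at_def)
  have xs: "xs \<in> C" using subseq_limit_in_C[OF strict_mono_id] lim by simp
  note F_lim = F_tendsto[OF lim] and F_ge = F_limit_le[OF lim]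
  have "\<forall>\<^sub>F k in sequentially. dist (x k) xs < \<Lambda> \<and> dist (F (x k)) (F xs) < \<eta> \<and> K + 2 \<le> k"
    using tendstoD[OF lim \<Lambda>] tendstoD[OF F_lim \<eta>] eventually_ge_at_top[of "K + 2"]
    by eventually_elim simp
  then obtain K' where K': "\<And>k. K' \<le> k \<Longrightarrow> dist (x k) xs < \<Lambda> \<and> dist (F (x k)) (F xs) < \<eta> \<and> K + 2 \<le> k"
    unfolding eventually_sequentially by blast
  show thesis
  proof (rule that[of K'])
    show "K + 1 < K'" using K'[of K'] by simp
    fix k assume k: "K' \<le> k"
    then have k1: "1 \<le> k" and near: "dist (x k) xs < \<Lambda>" "\<bar>F (x k) - F xs\<bar> < \<eta>"
      using K'[OF k] by (simp_all add: dist_real_def)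
    show "x k \<in> cball xs \<Lambda> \<and> \<bar>FC (x k) - ereal (F xs)\<bar> < ereal \<eta>"
      using near x_in_C[OF k1] by (simp add: dist_commute FC_def ind_def)
    show "0 \<le> F (x k) - F xs" using F_ge[OF k1] by simp
    show "(F (x (Suc k)) - F xs) powr (2 * t) \<le> KL_gamma c t * ((F (x k) - F xs) - (F (x (Suc k)) - F xs))"
    proof (cases "F (x (Suc k)) = F xs")
      case True
      then show ?thesis using KL_gamma_pos[OF c t(2)] F_decreasing[OF k1] by simp
    next
      case False
      have "x (Suc k) \<in> U" "\<bar>F (x (Suc k)) - F xs\<bar> < \<eta>"
        using K'[of "Suc k"] k U by (auto simp: dist_commute dist_real_def)
      then show ?thesis
        using KL_descent_step[OF KL c t xs, of k] False F_ge[of "Suc k"] K'[OF k] by simp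
    qed
  qed
qed

end

theorem theorem2:
  fixes A :: "complex ^ 'n ^ 'm" and y :: "complex ^ 'm"
    and f :: "complex ^ 'n \<Rightarrow> real" and gf :: "complex ^ 'n \<Rightarrow> complex ^ 'n"
    and L :: real and C :: "(complex ^ 'n) set" and K :: nat
    and \<alpha> :: "nat \<Rightarrow> real" and \<alpha>min \<alpha>max :: real
    and B :: "nat \<Rightarrow> complex ^ 'n ^ 'n" and \<eta>l \<eta>u :: real
    and V :: "nat \<Rightarrow> (complex ^ 'n) list" and x :: "nat \<Rightarrow> complex ^ 'n"
    and F :: "complex ^ 'n \<Rightarrow> real" and FC :: "complex ^ 'n \<Rightarrow> ereal"
    and Fbar :: "nat \<Rightarrow> complex ^ 'n \<Rightarrow> real"
    and S :: "nat \<Rightarrow> (complex ^ 'n) set" and r :: "nat \<Rightarrow> complex ^ 'n"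
    and \<upsilon> :: real
  assumes Ahy: "cadj A *v y \<noteq> 0"
    and f_grad: "\<forall>z. (f has_derivative (\<lambda>h. gf z \<bullet> h)) (at z)"
    and f_bdd: "bdd_below (range f)"
    and L_pos: "L > 0"
    and gf_lip: "\<forall>z1 z2. norm (gf z1 - gf z2) \<le> L * norm (z1 - z2)"
    and C_ne: "C \<noteq> {}" and C_closed: "closed C" and C_convex: "convex C"
    and F_def: "\<forall>z. F z = (1/2) * (norm (A *v z - y))\<^sup>2 + f z"
    and FC_def: "\<forall>z. FC z = ereal (F z) + ind C z"
    and K_pos: "K \<ge> 1"
    and eta_pos: "0 < \<eta>l" and eta_le: "\<eta>l \<le> \<eta>u"
    and B_herm: "\<forall>k\<ge>1. hermitian (B k)"
    and B_bounds: "\<forall>k\<ge>1. \<forall>v. \<eta>l * (norm v)\<^sup>2 \<le> mnorm2 (B k) v \<and> mnorm2 (B k) v \<le> \<eta>u * (norm v)\<^sup>2"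
    and alpha_bounds: "0 < \<alpha>min" "\<forall>k\<ge>1. \<alpha>min \<le> \<alpha> k \<and> \<alpha> k \<le> \<alpha>max"
      "\<alpha>max < 2 * \<eta>l / (\<eta>l + L)"
    and upsilon_def: "\<upsilon> = \<eta>l / \<alpha>max - (\<eta>l + L) / 2"
    and V1: "V 1 = [(1 / norm (cadj A *v y)) *\<^sub>R (cadj A *v y)]"
    and x1: "x 1 \<in> C \<inter> colspace (V 1)"
    and Fbar_def: "\<forall>k\<ge>1. \<forall>z. Fbar k z = (1/2) * (norm (A *v z - y))\<^sup>2 + gf (x k) \<bullet> z
                      + 1 / (2 * \<alpha> k) * mnorm2 (B k) (z - x k)"
    and S_def: "\<forall>k\<ge>1. S k = (if k \<le> K + 1 then colspace (V k) else UNIV)"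
    and x_min: "\<forall>k\<ge>1. x (Suc k) \<in> C \<inter> S k \<and>
                  (\<forall>z\<in>C \<inter> S k. Fbar k (x (Suc k)) \<le> Fbar k z)"
    and r_def: "\<forall>k\<ge>1. r k = cadj A *v (A *v x (Suc k) - y) + gf (x k)
                   + (1 / \<alpha> k) *\<^sub>R (B k *v (x (Suc k) - x k))"
    and V_upd: "\<forall>k. 1 \<le> k \<and> k \<le> K \<longrightarrow>
                  V (Suc k) = (if projperp (V k) (r k) \<noteq> 0
                               then V k @ [(1 / norm (projperp (V k) (r k))) *\<^sub>R projperp (V k) (r k)]
                               else V k)"
  shows "((\<lambda>k. norm (x (Suc k) - x k)) \<longlonglongrightarrow> 0) \<and>
         (\<forall>xh. (\<exists>\<sigma>::nat\<Rightarrow>nat. strict_mono \<sigma> \<and> (x \<circ> \<sigma>) \<longlonglongrightarrow> xh) \<longrightarrow>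
               (\<exists>v\<in>lsubdiff (ind C) xh. cadj A *v (A *v xh - y) + gf xh + v = 0))
         \<and>
         (\<forall>xs c t \<eta> U \<Lambda>. x \<longlonglongrightarrow> xs \<and> c > 0 \<and> 0 \<le> t \<and> t < 1 \<and> \<Lambda> > 0 \<and>
             cball xs \<Lambda> \<subseteq> U \<and> KL_power_at FC xs c t \<eta> U \<longrightarrow>
           (\<exists>K'. K' > K + 1 \<and>
              (\<forall>k\<ge>K'. x k \<in> cball xs \<Lambda> \<and> \<bar>FC (x k) - ereal (F xs)\<bar> < ereal \<eta>) \<and>
              (let FK = F (x K') - F xs;
                   \<gamma> = (SUP k\<in>{1..}. (c * (L * \<alpha> k + \<eta>u))\<^sup>2 / (\<upsilon> * (1 - t)\<^sup>2 * (\<alpha> k)\<^sup>2))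
               in (t = 0 \<longrightarrow> (\<forall>k\<ge>K'. F (x (Suc k)) - F xs
                                 \<le> max 0 (FK - (1 / \<gamma>) * real (k - K' + 1)))) \<and>
                  (0 < t \<and> t \<le> 1/2 \<longrightarrow> (\<forall>k\<ge>K'. F (x (Suc k)) - F xs
                     \<le> (1 - FK powr (2*t - 1) / (FK powr (2*t - 1) + \<gamma>)) ^ (k - K' + 1) * FK)) \<and>
                  (1/2 < t \<and> t < 1 \<longrightarrow> (\<forall>\<sigma>. 0 < \<sigma> \<and> \<sigma> < 1 \<longrightarrow>
                     (\<forall>\<^sub>F k in sequentially. F (x (Suc k)) - F xs
                        \<le> (FK powr (1 - 2*t) + ((t - 1/2) * (1 - \<sigma>) powr (2*t) / \<gamma>) * real (k - K' + 1))
                             powr (1 / (1 - 2*t))))))))"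
proof -
  interpret gksm A y f gf L C K \<alpha> \<alpha>min \<alpha>max B \<eta>l \<eta>u V x F FC Fbar S r \<upsilon>
  proof
    show "colspace (V k) \<subseteq> colspace (V (Suc k))" if "1 \<le> k" "k \<le> K" for k
      using V_upd that by (simp add: colspace_append_subset)
  qed (use assms in blast)+
  show ?thesis
  proof (intro conjI allI impI, goal_cases)
    case 1
    show ?case by (rule step_length_tendsto_zero)
  next
    case (2 xh)
    then show ?case using cluster_point_critical by blast
  next
    case (3 xs c t \<eta> U \<Lambda>)
    then obtain K' where K': "K + 1 < K'"
      "\<And>k. K' \<le> k \<Longrightarrow> x k \<in> cball xs \<Lambda> \<and> \<bar>FC (x k) - ereal (F xs)\<bar> < ereal \<eta>"
      and nonneg: "\<And>k. K' \<le> k \<Longrightarrow> 0 \<le> F (x k) - F xs"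
      and step: "\<And>k. K' \<le> k \<Longrightarrow> (F (x (Suc k)) - F xs) powr (2 * t)
                     \<le> KL_gamma c t * ((F (x k) - F xs) - (F (x (Suc k)) - F xs))"
      using eventually_in_KL_region by blast
    have \<gamma>: "0 < KL_gamma c t" using KL_gamma_pos 3 by blast
    have lim: "(\<lambda>k. F (x k) - F xs) \<longlonglongrightarrow> 0"
      using tendsto_diff[OF F_tendsto tendsto_const, of x xs "F xs"] 3 by simp
    let ?e = "\<lambda>k. F (x k) - F xs"
    note rates = KL_rate_exponent_zero[where e = ?e and m = K', OF \<gamma> nonneg step]
      KL_rate_linear[where e = ?e and m = K', OF \<gamma> nonneg step]
      KL_rate_sublinear[where e = ?e and m = K', OF \<gamma> nonneg step _ _ _ lim]
    show ?case unfolding Let_def KL_gamma_def[symmetric] using K' rates by blast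
  qed
qed

end
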